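(* A GNS $S\subseteq\mathbb{N}^d$ is quasi-irreducible if and only if for every $P\in PF(S)$, either $P\in FA(S)$ or $2P\in FA(S)$.
   Context: $\mathbb{N}=\{0,1,2,\dots\}$. A GNS is a submonoid $S\subseteq\mathbb{N}^d$ with finite complement $\mathcal{H}(S)=\mathbb{N}^d\setminus S$ (gaps). A relaxed monomial order is a total order $\prec$ on $\mathbb{N}^d$ with (i) $v\prec w\Rightarrow v\prec w+u$ for all $u\in\mathbb{N}^d$, (ii) $0\prec v$ for all $v\neq0$. A gap is Frobenius allowable if it equals $\max_\prec\mathcal{H}(S)$ for some relaxed monomial order; $FA(S)$ is the set of these. A gap $P$ is pseudo-Frobenius if $P+s\in S$ for all nonzero $s\in S$; $PF(S)$ is the set of these. $S$ is quasi-irreducible if for every $x\in\mathcal{H}(S)$, either $2x\in FA(S)$ or there is $F\in FA(S)$ with $F-x\in S$. *)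

theory Defs
  imports "HOL-Analysis.Analysis"
begin

text \<open>Points of N^d are modelled as vectors of type nat^'d, where the finite
  index type 'd has cardinality d.\<close>

definition GNS :: "(nat^'d) set \<Rightarrow> bool" where
  "GNS S \<longleftrightarrow> 0 \<in> S \<and> (\<forall>a\<in>S. \<forall>b\<in>S. a + b \<in> S) \<and> finite (UNIV - S)"

definition gaps :: "(nat^'d) set \<Rightarrow> (nat^'d) set" where
  "gaps S = UNIV - S"

definition relaxed_monomial_order :: "(nat^'d \<Rightarrow> nat^'d \<Rightarrow> bool) \<Rightarrow> bool" where
  "relaxed_monomial_order lt \<longleftrightarrow>
     (\<forall>v. \<not> lt v v) \<and>
     (\<forall>u v w. lt u v \<longrightarrow> lt v w \<longrightarrow> lt u w) \<and>
     (\<forall>v w. v \<noteq> w \<longrightarrow> lt v w \<or> lt w v) \<and>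
     (\<forall>v w u. lt v w \<longrightarrow> lt v (w + u)) \<and>
     (\<forall>v. v \<noteq> 0 \<longrightarrow> lt 0 v)"

definition is_max_wrt :: "(nat^'d \<Rightarrow> nat^'d \<Rightarrow> bool) \<Rightarrow> (nat^'d) set \<Rightarrow> nat^'d \<Rightarrow> bool" where
  "is_max_wrt lt A F \<longleftrightarrow> F \<in> A \<and> (\<forall>h\<in>A. h \<noteq> F \<longrightarrow> lt h F)"

definition FA :: "(nat^'d) set \<Rightarrow> (nat^'d) set" where
  "FA S = {F. \<exists>lt. relaxed_monomial_order lt \<and> is_max_wrt lt (gaps S) F}"

definition PF :: "(nat^'d) set \<Rightarrow> (nat^'d) set" where
  "PF S = {P \<in> gaps S. \<forall>s\<in>S. s \<noteq> 0 \<longrightarrow> P + s \<in> S}"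

definition quasi_irreducible :: "(nat^'d) set \<Rightarrow> bool" where
  "quasi_irreducible S \<longleftrightarrow>
     (\<forall>x\<in>gaps S. x + x \<in> FA S \<or> (\<exists>F\<in>FA S. \<exists>s\<in>S. F = x + s))"

end

theory Submission
  imports Defs
begin

text \<open>A pseudo-Frobenius number P cannot be moved inside the gaps by a nonzero element of S,
  while every gap x lies below one: among the s \<in> S with x + s a gap (finitely many, 0 among
  them) take one that is maximal componentwise; then x + s is pseudo-Frobenius. Hence the
  witness F = x + s of quasi-irreducibility may always be taken pseudo-Frobenius, and when it
  is not Frobenius allowable, 2(x + s) = x + (x + s + s) with x + s + s \<in> S for s \<noteq> 0.\<close>

lemma FA_subset_gaps: "FA S \<subseteq> gaps S"
  by (auto simp: FA_def is_max_wrt_def)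

lemma PF_add_gap_imp_zero:
  assumes "P \<in> PF S" "s \<in> S" "P + s \<in> gaps S"
  shows "s = 0"
  using assms by (auto simp: PF_def gaps_def)

lemma GNS_gap_below_PF:
  fixes S :: "(nat^'d) set"
  assumes "GNS S" "x \<in> gaps S"
  obtains s where "s \<in> S" "x + s \<in> PF S"
proof -
  define A where "A = {s \<in> S. x + s \<in> gaps S}"
  have "A \<subseteq> (+) x -` gaps S"
    by (auto simp: A_def)
  moreover have "finite ((+) x -` gaps S)"
    using assms(1) by (intro finite_vimageI) (auto simp: GNS_def gaps_def inj_def)
  ultimately have "finite A"
    by (rule finite_subset)
  moreover have "0 \<in> A"
    using assms by (simp add: A_def GNS_def)
  ultimately obtain s where "s \<in> A" and s_max: "\<And>t. t \<in> A \<Longrightarrow> s \<le> t \<Longrightarrow> s = t"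
    using finite_has_maximal[of A] by blast
  have "x + s \<in> PF S"
    unfolding PF_def
  proof (intro CollectI conjI ballI impI)
    show "x + s \<in> gaps S"
      using \<open>s \<in> A\<close> by (simp add: A_def)
    fix t assume "t \<in> S" "t \<noteq> 0"
    have "s + t \<in> S"
      using assms(1) \<open>s \<in> A\<close> \<open>t \<in> S\<close> by (simp add: A_def GNS_def)
    moreover have "s \<noteq> s + t"
      using \<open>t \<noteq> 0\<close> by (simp add: vec_eq_iff)
    moreover have "s \<le> s + t"
      by (simp add: less_eq_vec_def)
    ultimately have "s + t \<notin> A"
      using s_max by blast
    with \<open>s + t \<in> S\<close> show "x + s + t \<in> S"
      by (simp add: A_def gaps_def add.assoc)
  qed
  with \<open>s \<in> A\<close> show thesis
    by (intro that) (simp_all add: A_def)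
qed

theorem proposition3p3:
  fixes S :: "(nat^'d) set"
  assumes "GNS S"
  shows "quasi_irreducible S \<longleftrightarrow> (\<forall>P\<in>PF S. P \<in> FA S \<or> P + P \<in> FA S)"
proof
  assume quasi: "quasi_irreducible S"
  show "\<forall>P\<in>PF S. P \<in> FA S \<or> P + P \<in> FA S"
  proof
    fix P assume "P \<in> PF S"
    then have "P \<in> gaps S"
      by (simp add: PF_def)
    with quasi have "P + P \<in> FA S \<or> (\<exists>s\<in>S. P + s \<in> FA S)"
      by (auto simp: quasi_irreducible_def)
    with \<open>P \<in> PF S\<close> show "P \<in> FA S \<or> P + P \<in> FA S"
      using FA_subset_gaps PF_add_gap_imp_zero by fastforce
  qed
next
  assume PF_FA: "\<forall>P\<in>PF S. P \<in> FA S \<or> P + P \<in> FA S"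
  show "quasi_irreducible S"
    unfolding quasi_irreducible_def
  proof
    fix x assume "x \<in> gaps S"
    with assms obtain s where "s \<in> S" and P: "x + s \<in> PF S"
      by (rule GNS_gap_below_PF)
    have "x + s + s \<in> S" if "s \<noteq> 0"
      using P \<open>s \<in> S\<close> that by (simp add: PF_def)
    moreover have "(x + s) + (x + s) = x + (x + s + s)"
      by (simp add: algebra_simps)
    ultimately show "x + x \<in> FA S \<or> (\<exists>F\<in>FA S. \<exists>t\<in>S. F = x + t)"
      using PF_FA P \<open>s \<in> S\<close> by (cases "s = 0") fastforce+
  qed
qed

end
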